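(* Let $\mathbf B^{(1)}\in\mathbb Q^{d\times n}$ be an LLL-reduced basis and $\gamma\ge2$. Then $\mathbf B^{(2)}=(\mathbf b_1^{(2)},\dots,\mathbf b_n^{(2)}):=A_{\mathbf B^{(1)},\gamma}\mathbf B^{(1)}$ is LLL-reduced, and for all $i$, \[ \|\mathbf b_1^{(2)}\|/2^n\le\|\tilde{\mathbf b}_i^{(2)}\|\le\|\mathbf b_i^{(2)}\|\le(2\gamma)^i\|\mathbf b_1^{(2)}\|. \]
   Context: Gram–Schmidt orthogonalization of a basis $\mathbf B=(\mathbf b_1,\dots,\mathbf b_n)$: $\tilde{\mathbf b}_1=\mathbf b_1$, $\tilde{\mathbf b}_i=\Pi_{\{\mathbf b_1,\dots,\mathbf b_{i-1}\}^\perp}(\mathbf b_i)$; $\mu_{i,j}:=\langle\tilde{\mathbf b}_i,\mathbf b_j\rangle/\|\tilde{\mathbf b}_i\|^2$. $\mathbf B$ is LLL-reduced if $|\mu_{i,j}|\le 1/2$ for all $i<j$ and $\tfrac34\|\tilde{\mathbf b}_i\|^2\le\|\tilde{\mathbf b}_{i+1}\|^2+\mu_{i,i+1}^2\|\tilde{\mathbf b}_i\|^2$ for $1\le i\le n-1$. For a basis $\mathbf B$ and $\gamma\ge1$: $\alpha_1=1$, $\alpha_i=\max\{\alpha_{i-1},\lceil\|\tilde{\mathbf b}_i\|/(\gamma^i\|\mathbf b_1\|)\rceil\}$, and $A_{\mathbf B,\gamma}$ is the unique linear map with $A_{\mathbf B,\gamma}\tilde{\mathbf b}_i=\tilde{\mathbf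 b}_i/\alpha_i$ for all $i$ and identity on $\{\mathbf b_1,\dots,\mathbf b_n\}^\perp$. *)

theory Defs
  imports "HOL-Analysis.Analysis"
begin

text \<open>A basis is a family b_1,...,b_n of vectors in R^d (indices 1..n), d given by the
finite index type 'd.\<close>

function gso :: "(nat \<Rightarrow> real ^ 'd) \<Rightarrow> nat \<Rightarrow> real ^ 'd" where
  "gso b i = b i - (\<Sum>j\<in>{1..<i}. ((gso b j \<bullet> b i) / (norm (gso b j))\<^sup>2) *\<^sub>R gso b j)"
  by auto
termination by (relation "Wellfounded.measure (\<lambda>(b, i). i)") auto

declare gso.simps [simp del]

definition mu :: "(nat \<Rightarrow> real ^ 'd) \<Rightarrow> nat \<Rightarrow> nat \<Rightarrow> real" where
  "mu b i j = (gso b i \<bullet> b j) / (norm (gso b i))\<^sup>2"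

definition LLL_reduced :: "(nat \<Rightarrow> real ^ 'd) \<Rightarrow> nat \<Rightarrow> bool" where
  "LLL_reduced b n \<longleftrightarrow>
     (\<forall>i j. 1 \<le> i \<and> i < j \<and> j \<le> n \<longrightarrow> \<bar>mu b i j\<bar> \<le> 1/2) \<and>
     (\<forall>i. 1 \<le> i \<and> i \<le> n - 1 \<longrightarrow>
        3/4 * (norm (gso b i))\<^sup>2 \<le> (norm (gso b (i+1)))\<^sup>2 + (mu b i (i+1))\<^sup>2 * (norm (gso b i))\<^sup>2)"

definition rat_basis :: "(nat \<Rightarrow> real ^ 'd) \<Rightarrow> nat \<Rightarrow> bool" where
  "rat_basis b n \<longleftrightarrow> inj_on b {1..n} \<and> independent (b ` {1..n}) \<and>
     (\<forall>i\<in>{1..n}. \<forall>k. b i $ k \<in> \<rat>)"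

fun alpha :: "(nat \<Rightarrow> real ^ 'd) \<Rightarrow> real \<Rightarrow> nat \<Rightarrow> real" where
  "alpha b \<gamma> 0 = 1"
| "alpha b \<gamma> (Suc 0) = 1"
| "alpha b \<gamma> (Suc (Suc k)) = max (alpha b \<gamma> (Suc k))
      (of_int \<lceil>norm (gso b (Suc (Suc k))) / (\<gamma> ^ Suc (Suc k) * norm (b 1))\<rceil>)"

definition A_map :: "(nat \<Rightarrow> real ^ 'd) \<Rightarrow> nat \<Rightarrow> real \<Rightarrow> real ^ 'd \<Rightarrow> real ^ 'd" where
  "A_map b n \<gamma> = (THE f. linear f \<and>
      (\<forall>i\<in>{1..n}. f (gso b i) = (1 / alpha b \<gamma> i) *\<^sub>R gso b i) \<and>
      (\<forall>x. (\<forall>i\<in>{1..n}. x \<bullet> b i = 0) \<longrightarrow> f x = x))"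

end

theory Submission
  imports Defs
begin

text \<open>
  Let \<open>g\<^sub>i\<close> be the Gram--Schmidt vectors of \<open>B\<close>. Since \<open>A = A\<^bsub>B,\<gamma>\<^esub>\<close> is linear and maps \<open>g\<^sub>i\<close> to
  \<open>g\<^sub>i / \<alpha>\<^sub>i\<close>, the basis \<open>A B\<close> has Gram--Schmidt vectors \<open>g\<^sub>i / \<alpha>\<^sub>i\<close> and the same coefficients
  \<open>\<mu>\<^sub>i\<^sub>j\<close>, so size reduction is inherited. If \<open>\<alpha>\<^sub>i\<^sub>+\<^sub>1 = \<alpha>\<^sub>i\<close>, the Lovasz condition at \<open>i\<close> is
  the old one divided by \<open>\<alpha>\<^sub>i\<^sup>2\<close>; otherwise \<open>\<alpha>\<^sub>i\<^sub>+\<^sub>1\<close> is a ceiling \<open>\<ge> 2\<close>, which forces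
  \<open>\<parallel>g\<^sub>i\<^sub>+\<^sub>1\<parallel> / \<alpha>\<^sub>i\<^sub>+\<^sub>1 \<ge> \<gamma>\<^sup>i\<^sup>+\<^sup>1 \<parallel>b\<^sub>1\<parallel> / 2 \<ge> \<gamma>\<^sup>i \<parallel>b\<^sub>1\<parallel> \<ge> \<parallel>g\<^sub>i\<parallel> / \<alpha>\<^sub>i\<close> as \<open>\<gamma> \<ge> 2\<close>.
  The norm bounds hold for every LLL-reduced basis whose Gram--Schmidt norms satisfy
  \<open>\<parallel>g\<^sub>i\<parallel> / \<alpha>\<^sub>i \<le> \<gamma>\<^sup>i \<parallel>b\<^sub>1\<parallel>\<close>, which is what the choice of \<open>\<alpha>\<^sub>i\<close> guarantees, and \<open>A\<close> fixes \<open>b\<^sub>1\<close>.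
\<close>

section \<open>Gram--Schmidt orthogonalization\<close>

lemma gso_eq_mu: "gso b i = b i - (\<Sum>j\<in>{1..<i}. mu b j i *\<^sub>R gso b j)"
  by (subst gso.simps) (simp add: mu_def)

lemma gso_decomposition: "b i = gso b i + (\<Sum>j\<in>{1..<i}. mu b j i *\<^sub>R gso b j)"
  using gso_eq_mu[of b i] by simp

lemma gso_1: "gso b 1 = b 1"
  by (subst gso.simps) simp

lemma inner_sum_orthogonal:
  fixes g :: "nat \<Rightarrow> 'a::real_inner"
  assumes "finite S" "\<forall>k\<in>S. k \<noteq> j \<longrightarrow> g j \<bullet> g k = 0"
  shows "g j \<bullet> (\<Sum>k\<in>S. a k *\<^sub>R g k) = (if j \<in> S then a j * (g j \<bullet> g j) else 0)"
proof -
  have "g j \<bullet> (\<Sum>k\<in>S. a k *\<^sub>R g k) = (\<Sum>k\<in>S. if k = j then a j * (g j \<bullet> g j) else 0)"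
    unfolding inner_sum_right using assms(2) by (intro sum.cong) auto
  then show ?thesis
    using assms(1) by (simp add: sum.delta)
qed

lemma norm_sum_orthogonal:
  fixes v :: "nat \<Rightarrow> 'a::real_inner"
  assumes "finite S" "\<And>i j. i \<in> S \<Longrightarrow> j \<in> S \<Longrightarrow> i \<noteq> j \<Longrightarrow> v i \<bullet> v j = 0"
  shows "(norm (\<Sum>i\<in>S. v i))\<^sup>2 = (\<Sum>i\<in>S. (norm (v i))\<^sup>2)"
  using assms
proof (induction S rule: finite_induct)
  case (insert x F)
  have "v x \<bullet> (\<Sum>i\<in>F. v i) = 0"
    using insert by (auto simp: inner_sum_right intro!: sum.neutral)
  then have "(norm (v x + (\<Sum>i\<in>F. v i)))\<^sup>2 = (norm (v x))\<^sup>2 + (norm (\<Sum>i\<in>F. v i))\<^sup>2"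
    by (intro norm_add_Pythagorean) (simp add: orthogonal_def)
  then show ?case
    using insert by simp
qed simp

lemma gso_orthogonal_lt: "1 \<le> j \<Longrightarrow> j < i \<Longrightarrow> gso b j \<bullet> gso b i = 0"
proof (induction i arbitrary: j rule: less_induct)
  case (less i)
  have orth: "\<forall>k\<in>{1..<i}. k \<noteq> j \<longrightarrow> gso b j \<bullet> gso b k = 0"
  proof (intro ballI impI)
    fix k assume k: "k \<in> {1..<i}" "k \<noteq> j"
    then consider "k < j" | "j < k" by linarith
    then show "gso b j \<bullet> gso b k = 0"
      by cases (use less.IH[of j k] less.IH[of k j] less.prems k in \<open>auto simp: inner_commute\<close>)
  qed
  have "gso b j \<bullet> gso b i = gso b j \<bullet> b i - mu b j i * (gso b j \<bullet> gso b j)"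
    using inner_sum_orthogonal[OF _ orth, of "\<lambda>k. mu b k i"] less.prems
    by (subst gso_eq_mu) (simp add: inner_diff_right)
  also have "\<dots> = 0"
    by (cases "gso b j = 0") (simp_all add: mu_def power2_norm_eq_inner)
  finally show ?case .
qed

lemma gso_orthogonal: "1 \<le> i \<Longrightarrow> 1 \<le> j \<Longrightarrow> i \<noteq> j \<Longrightarrow> gso b i \<bullet> gso b j = 0"
  by (metis gso_orthogonal_lt inner_commute linorder_neqE_nat)

lemma norm_sq_eq_gso:
  "(norm (b i))\<^sup>2 = (norm (gso b i))\<^sup>2 + (\<Sum>j\<in>{1..<i}. (mu b j i * norm (gso b j))\<^sup>2)"
proof -
  have "gso b i \<bullet> (\<Sum>j\<in>{1..<i}. mu b j i *\<^sub>R gso b j) = 0"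
    using inner_sum_orthogonal[where S="{1..<i}" and g="gso b" and j=i and a="\<lambda>j. mu b j i"]
      gso_orthogonal[of i _ b] by auto
  then have "(norm (b i))\<^sup>2 = (norm (gso b i))\<^sup>2 + (norm (\<Sum>j\<in>{1..<i}. mu b j i *\<^sub>R gso b j))\<^sup>2"
    by (subst gso_decomposition) (intro norm_add_Pythagorean, simp add: orthogonal_def)
  also have "(norm (\<Sum>j\<in>{1..<i}. mu b j i *\<^sub>R gso b j))\<^sup>2 = (\<Sum>j\<in>{1..<i}. (mu b j i * norm (gso b j))\<^sup>2)"
    by (subst norm_sum_orthogonal) (simp_all add: gso_orthogonal power_mult_distrib)
  finally show ?thesis .
qed

lemma norm_gso_le_norm: "norm (gso b i) \<le> norm (b i)"
proof (rule power2_le_imp_le)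
  show "(norm (gso b i))\<^sup>2 \<le> (norm (b i))\<^sup>2"
    unfolding norm_sq_eq_gso[of b i] by (simp add: sum_nonneg)
qed simp

lemma gso_eq_of_triangular:
  fixes g :: "nat \<Rightarrow> real ^ 'd"
  assumes orth: "\<And>i j. 1 \<le> i \<Longrightarrow> 1 \<le> j \<Longrightarrow> i \<noteq> j \<Longrightarrow> g i \<bullet> g j = 0"
    and c: "\<And>k. 1 \<le> k \<Longrightarrow> k \<le> N \<Longrightarrow> c k = g k + (\<Sum>j\<in>{1..<k}. m j k *\<^sub>R g j)"
    and i: "1 \<le> i" "i \<le> N"
  shows "gso c i = g i" and "1 \<le> h \<Longrightarrow> h < i \<Longrightarrow> g h \<noteq> 0 \<Longrightarrow> mu c h i = m h i"
proof -
  have inner_c: "g j \<bullet> c k = m j k * (g j \<bullet> g j)" if "1 \<le> j" "j < k" "k \<le> N" for j k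
  proof -
    have "g j \<bullet> g k = 0" and "\<forall>l\<in>{1..<k}. l \<noteq> j \<longrightarrow> g j \<bullet> g l = 0"
      using orth that by auto
    then show ?thesis
      using inner_sum_orthogonal[where S="{1..<k}" and g=g and j=j and a="\<lambda>l. m l k"] c that
      by (simp add: inner_add_right)
  qed
  have gso_c: "gso c k = g k" if "1 \<le> k" "k \<le> N" for k
    using that
  proof (induction k rule: less_induct)
    case (less k)
    have "mu c j k *\<^sub>R gso c j = m j k *\<^sub>R g j" if j: "j \<in> {1..<k}" for j
    proof -
      have "gso c j = g j"
        using less.IH[of j] j less.prems by auto
      then show ?thesis
        using inner_c[of j k] j less.prems
        by (cases "g j = 0") (simp_all add: mu_def power2_norm_eq_inner)
    qed
    then show ?case
      using gso_eq_mu[of c k] c[OF less.prems] by simp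
  qed
  show "gso c i = g i"
    using gso_c i .
  show "mu c h i = m h i" if "1 \<le> h" "h < i" "g h \<noteq> 0"
    using that inner_c[of h i] gso_c[of h] i by (simp add: mu_def power2_norm_eq_inner)
qed

lemma
  fixes A :: "real ^ 'd \<Rightarrow> real ^ 'd"
  assumes A: "linear A" "\<And>i. i \<in> {1..n} \<Longrightarrow> A (gso b i) = s i *\<^sub>R gso b i"
    and s: "\<And>i. i \<in> {1..n} \<Longrightarrow> s i \<noteq> 0"
  shows gso_linear_rescale: "i \<in> {1..n} \<Longrightarrow> gso (\<lambda>j. A (b j)) i = s i *\<^sub>R gso b i"
    and mu_linear_rescale: "1 \<le> h \<Longrightarrow> h < i \<Longrightarrow> i \<le> n \<Longrightarrow> mu (\<lambda>j. A (b j)) h i = mu b h i"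
proof -
  define g where "g i = s i *\<^sub>R gso b i" for i
  have orth: "g i \<bullet> g j = 0" if "1 \<le> i" "1 \<le> j" "i \<noteq> j" for i j
    using gso_orthogonal[OF that, of b] by (simp add: g_def)
  have triangular: "A (b k) = g k + (\<Sum>j\<in>{1..<k}. mu b j k *\<^sub>R g j)" if "1 \<le> k" "k \<le> n" for k
    using that A
    by (subst gso_decomposition) (simp add: g_def linear_add linear_sum linear_scale)
  show "gso (\<lambda>j. A (b j)) i = s i *\<^sub>R gso b i" if "i \<in> {1..n}"
    using gso_eq_of_triangular(1)[OF orth triangular] that by (simp add: g_def)
  show "mu (\<lambda>j. A (b j)) h i = mu b h i" if "1 \<le> h" "h < i" "i \<le> n"
  proof (cases "gso b h = 0")
    case True
    then show ?thesis
      using gso_eq_of_triangular(1)[OF orth triangular, where i=h] that by (simp add: g_def mu_def)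
  next
    case False
    then show ?thesis
      using gso_eq_of_triangular(2)[OF orth triangular, where i=i and h=h] that s[of h] by (simp add: g_def)
  qed
qed

section \<open>Norm bounds for LLL-reduced bases\<close>

lemma LLL_reduced_norm_gso_le_Suc:
  assumes "LLL_reduced c n" "1 \<le> i" "i + 1 \<le> n"
  shows "(norm (gso c i))\<^sup>2 \<le> 2 * (norm (gso c (i+1)))\<^sup>2"
proof -
  have "\<bar>mu c i (i+1)\<bar> \<le> 1/2" and
    lovasz: "3/4 * (norm (gso c i))\<^sup>2 \<le> (norm (gso c (i+1)))\<^sup>2 + (mu c i (i+1))\<^sup>2 * (norm (gso c i))\<^sup>2"
    using assms unfolding LLL_reduced_def by auto
  then have "(mu c i (i+1))\<^sup>2 \<le> 1/4"
    using power_mono[of "\<bar>mu c i (i+1)\<bar>" "1/2" 2] by (simp add: power2_eq_square)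
  then have "(mu c i (i+1))\<^sup>2 * (norm (gso c i))\<^sup>2 \<le> 1/4 * (norm (gso c i))\<^sup>2"
    by (rule mult_right_mono) simp
  then show ?thesis
    using lovasz by linarith
qed

lemma LLL_reduced_norm_first_sq_le:
  assumes "LLL_reduced c n" "1 \<le> k" "k \<le> n"
  shows "(norm (c 1))\<^sup>2 \<le> 2 ^ (k - 1) * (norm (gso c k))\<^sup>2"
  using assms(2,3)
proof (induction k rule: nat_induct_at_least)
  case base
  show ?case
    unfolding gso_1 by simp
next
  case (Suc k)
  have "(norm (c 1))\<^sup>2 \<le> 2 ^ (k - 1) * (norm (gso c k))\<^sup>2"
    using Suc.IH Suc.prems by simp
  also have "\<dots> \<le> 2 ^ (k - 1) * (2 * (norm (gso c (k+1)))\<^sup>2)"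
    using LLL_reduced_norm_gso_le_Suc[OF assms(1) Suc.hyps] Suc.prems by (intro mult_left_mono) auto
  also have "\<dots> = 2 ^ (Suc k - 1) * (norm (gso c (Suc k)))\<^sup>2"
    using Suc.hyps by (cases k) simp_all
  finally show ?case .
qed

lemma LLL_reduced_norm_first_le:
  assumes "LLL_reduced c n" "i \<in> {1..n}"
  shows "norm (c 1) / 2 ^ n \<le> norm (gso c i)"
proof -
  have "(norm (c 1))\<^sup>2 \<le> 2 ^ (i - 1) * (norm (gso c i))\<^sup>2"
    using LLL_reduced_norm_first_sq_le[OF assms(1)] assms(2) by simp
  also have "\<dots> \<le> (2 ^ n)\<^sup>2 * (norm (gso c i))\<^sup>2"
  proof (rule mult_right_mono)
    have "(2::real) ^ (i - 1) \<le> 2 ^ n"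
      using assms(2) by (intro power_increasing) auto
    also have "\<dots> \<le> (2 ^ n)\<^sup>2"
      by (simp add: power2_eq_square)
    finally show "(2::real) ^ (i - 1) \<le> (2 ^ n)\<^sup>2" .
  qed simp
  also have "\<dots> = (2 ^ n * norm (gso c i))\<^sup>2"
    by (rule power_mult_distrib[symmetric])
  finally have "norm (c 1) \<le> 2 ^ n * norm (gso c i)"
    by (rule power2_le_imp_le) simp
  then show ?thesis
    by (simp add: divide_le_eq mult.commute)
qed

text \<open>The crude estimate \<open>i \<le> 4\<^sup>i\<close> turns \<open>\<parallel>c\<^sub>i\<parallel>\<^sup>2 \<le> i M\<^sup>2\<close> into a bound of the form of the theorem.\<close>

lemma norm_le_of_norm_gso_le:
  assumes "1 \<le> i" "\<And>j. 1 \<le> j \<Longrightarrow> j < i \<Longrightarrow> \<bar>mu c j i\<bar> \<le> 1"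
    and "\<And>j. 1 \<le> j \<Longrightarrow> j \<le> i \<Longrightarrow> norm (gso c j) \<le> M"
  shows "norm (c i) \<le> 2 ^ i * M"
proof -
  have M: "0 \<le> M"
    using assms(1) assms(3)[of i] norm_ge_zero order_trans by blast
  have "(mu c j i * norm (gso c j))\<^sup>2 \<le> M\<^sup>2" if "j \<in> {1..<i}" for j
  proof -
    have "\<bar>mu c j i\<bar> * norm (gso c j) \<le> 1 * M"
      using that assms(2,3) M by (intro mult_mono) auto
    then show ?thesis
      using power_mono[of "\<bar>mu c j i\<bar> * norm (gso c j)" M 2] by (simp add: power_mult_distrib)
  qed
  then have "(norm (c i))\<^sup>2 \<le> M\<^sup>2 + (\<Sum>j\<in>{1..<i}. M\<^sup>2)"
    unfolding norm_sq_eq_gso[of c i]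
    using power_mono[OF assms(3)[OF assms(1) order_refl], of 2]
    by (intro add_mono sum_mono) auto
  also have "\<dots> = real i * M\<^sup>2"
    using assms(1) by (simp add: of_nat_diff algebra_simps)
  also have "\<dots> \<le> 4 ^ i * M\<^sup>2"
  proof (rule mult_right_mono)
    have "i < 2 ^ i"
      by (rule less_exp)
    also have "(2::nat) ^ i \<le> 4 ^ i"
      by (simp add: power_mono)
    finally show "real i \<le> 4 ^ i"
      by (metis less_imp_le of_nat_le_iff of_nat_numeral of_nat_power)
  qed simp
  also have "\<dots> = (2 ^ i * M)\<^sup>2"
  proof -
    have "(4::real) ^ i = (2 ^ i)\<^sup>2"
      by (simp add: power2_eq_square flip: power_mult_distrib)
    then show ?thesis
      by (simp add: power_mult_distrib)
  qed
  finally show ?thesis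
    by (rule power2_le_imp_le) (simp add: M)
qed

definition gso_scaled_proj :: "(nat \<Rightarrow> real ^ 'd) \<Rightarrow> nat \<Rightarrow> (nat \<Rightarrow> real) \<Rightarrow> real ^ 'd \<Rightarrow> real ^ 'd"
  where "gso_scaled_proj b n t x = (\<Sum>i\<in>{1..n}. (t i * (x \<bullet> gso b i) / (norm (gso b i))\<^sup>2) *\<^sub>R gso b i)"

lemma linear_gso_scaled_proj: "linear (gso_scaled_proj b n t)"
  by (rule linearI)
    (simp_all add: gso_scaled_proj_def inner_add_left distrib_left add_divide_distrib
      scaleR_add_left sum.distrib scaleR_sum_right mult.left_commute)

lemma gso_scaled_proj_gso:
  assumes "k \<in> {1..n}"
  shows "gso_scaled_proj b n t (gso b k) = t k *\<^sub>R gso b k"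
proof -
  have "gso_scaled_proj b n t (gso b k) = (\<Sum>i\<in>{1..n}. if i = k then t k *\<^sub>R gso b k else 0)"
    unfolding gso_scaled_proj_def using assms gso_orthogonal[of k _ b]
    by (intro sum.cong) (auto simp: power2_norm_eq_inner)
  then show ?thesis
    using assms by simp
qed

lemma inner_gso_eq_0:
  assumes "\<And>i. i \<in> {1..n} \<Longrightarrow> x \<bullet> b i = 0" "k \<in> {1..n}"
  shows "x \<bullet> gso b k = 0"
  using assms(2)
proof (induction k rule: less_induct)
  case (less k)
  have "x \<bullet> gso b k = x \<bullet> b k - (\<Sum>j\<in>{1..<k}. mu b j k * (x \<bullet> gso b j))"
    by (subst gso_eq_mu) (simp add: inner_diff_right inner_sum_right)
  then show ?case
    using assms(1) less by simp
qed

lemma gso_scaled_proj_eq_0: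
  "(\<And>i. i \<in> {1..n} \<Longrightarrow> x \<bullet> b i = 0) \<Longrightarrow> gso_scaled_proj b n t x = 0"
  using inner_gso_eq_0[of n x b] by (simp add: gso_scaled_proj_def)

lemma inner_sub_gso_scaled_proj_eq_0:
  assumes "k \<in> {1..n}"
  shows "(x - gso_scaled_proj b n (\<lambda>_. 1) x) \<bullet> b k = 0"
proof -
  define r where "r = x - gso_scaled_proj b n (\<lambda>_. 1) x"
  have r_gso: "r \<bullet> gso b j = 0" if "j \<in> {1..n}" for j
  proof -
    have "\<forall>i\<in>{1..n}. i \<noteq> j \<longrightarrow> gso b j \<bullet> gso b i = 0"
      using gso_orthogonal[of j _ b] that by auto
    then have "gso b j \<bullet> gso_scaled_proj b n (\<lambda>_. 1) x = x \<bullet> gso b j"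
      using inner_sum_orthogonal[where S="{1..n}" and g="gso b" and j=j
          and a="\<lambda>i. (x \<bullet> gso b i) / (norm (gso b i))\<^sup>2"] that
      by (cases "gso b j = 0") (simp_all add: gso_scaled_proj_def power2_norm_eq_inner)
    then show ?thesis
      by (simp add: r_def inner_diff_right inner_commute)
  qed
  have "r \<bullet> b k = r \<bullet> gso b k + (\<Sum>j\<in>{1..<k}. mu b j k * (r \<bullet> gso b j))"
    by (subst gso_decomposition) (simp add: inner_add_right inner_sum_right)
  then show ?thesis
    using r_gso assms by (simp add: r_def)
qed

text \<open>On \<open>span(B)\<close> the identity is \<open>gso_scaled_proj b n (\<lambda>_. 1)\<close>, so \<open>A\<^bsub>B,\<gamma>\<^esub>\<close> replaces this
  orthogonal projection by its rescaled version.\<close>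

lemma A_map_eq:
  "A_map b n \<gamma> = (\<lambda>x. x - gso_scaled_proj b n (\<lambda>_. 1) x + gso_scaled_proj b n (\<lambda>i. 1 / alpha b \<gamma> i) x)"
  (is "_ = ?E")
proof -
  let ?P = "gso_scaled_proj b n (\<lambda>_. 1)" and ?Q = "gso_scaled_proj b n (\<lambda>i. 1 / alpha b \<gamma> i)"
  have E_linear: "linear ?E"
    using linear_gso_scaled_proj
    by (intro linear_compose_add linear_compose_sub) (auto simp: linear_ident)
  have E_gso: "\<forall>i\<in>{1..n}. ?E (gso b i) = (1 / alpha b \<gamma> i) *\<^sub>R gso b i"
    by (simp add: gso_scaled_proj_gso)
  have E_orth: "\<forall>x. (\<forall>i\<in>{1..n}. x \<bullet> b i = 0) \<longrightarrow> ?E x = x"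
  proof (intro allI impI)
    fix x assume "\<forall>i\<in>{1..n}. x \<bullet> b i = 0"
    then have "gso_scaled_proj b n t x = 0" for t
      by (intro gso_scaled_proj_eq_0) auto
    then show "?E x = x"
      by simp
  qed
  have E_unique: "f = ?E"
    if f: "linear f" "\<forall>i\<in>{1..n}. f (gso b i) = (1 / alpha b \<gamma> i) *\<^sub>R gso b i"
      "\<forall>x. (\<forall>i\<in>{1..n}. x \<bullet> b i = 0) \<longrightarrow> f x = x" for f
  proof
    fix x
    have "f (?P x) = ?Q x"
      using f(1,2) by (simp add: gso_scaled_proj_def linear_sum linear_scale mult.commute)
    moreover have "f (x - ?P x) = x - ?P x"
      using f(3) inner_sub_gso_scaled_proj_eq_0 by blast
    moreover have "f x = f (x - ?P x) + f (?P x)"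
      using linear_add[OF f(1), of "x - ?P x" "?P x"] by simp
    ultimately show "f x = ?E x"
      by simp
  qed
  show ?thesis
    unfolding A_map_def using E_linear E_gso E_orth E_unique by (intro the_equality) blast+
qed

lemma linear_A_map: "linear (A_map b n \<gamma>)"
  unfolding A_map_eq using linear_gso_scaled_proj
  by (intro linear_compose_add linear_compose_sub) (auto simp: linear_ident)

lemma A_map_gso: "i \<in> {1..n} \<Longrightarrow> A_map b n \<gamma> (gso b i) = (1 / alpha b \<gamma> i) *\<^sub>R gso b i"
  by (simp add: A_map_eq gso_scaled_proj_gso)

lemma alpha_ge_1: "alpha b \<gamma> i \<ge> 1"
  by (induction b \<gamma> i rule: alpha.induct) auto

lemma alpha_Suc:
  "1 \<le> i \<Longrightarrow> alpha b \<gamma> (Suc i) =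
     max (alpha b \<gamma> i) (of_int \<lceil>norm (gso b (Suc i)) / (\<gamma> ^ Suc i * norm (b 1))\<rceil>)"
  by (cases i) auto

lemma norm_gso_div_alpha_le:
  assumes "\<gamma> \<ge> 1" "b 1 \<noteq> 0" "1 \<le> i"
  shows "norm (gso b i) / alpha b \<gamma> i \<le> \<gamma> ^ i * norm (b 1)"
proof (cases "i = 1")
  case True
  have "norm (b 1) \<le> \<gamma> * norm (b 1)"
    using mult_right_mono[OF assms(1), of "norm (b 1)"] by simp
  then show ?thesis
    using True gso_1[of b] by simp
next
  case False
  define k where "k = i - 1"
  have k: "i = Suc k" "1 \<le> k"
    using assms(3) False by (simp_all add: k_def)
  have pos: "\<gamma> ^ i * norm (b 1) > 0"
    using assms by simp
  have "norm (gso b i) / (\<gamma> ^ i * norm (b 1)) \<le> of_int \<lceil>norm (gso b i) / (\<gamma> ^ i * norm (b 1))\<rceil>"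
    by (rule le_of_int_ceiling)
  also have "\<dots> \<le> alpha b \<gamma> i"
    unfolding k(1) alpha_Suc[OF k(2)] by (rule max.cobounded2)
  finally have "norm (gso b i) / (\<gamma> ^ i * norm (b 1)) \<le> alpha b \<gamma> i" .
  then show ?thesis
    using pos alpha_ge_1[of b \<gamma> i] by (simp add: divide_le_eq mult.commute)
qed

text \<open>When \<open>\<alpha>\<close> increases at \<open>i + 1\<close>, it is a ceiling \<open>\<lceil>x\<rceil> \<ge> 2\<close>, and then \<open>\<lceil>x\<rceil> / 2 \<le> x\<close>.\<close>

lemma norm_gso_div_alpha_ge:
  assumes "\<gamma> > 0" "b 1 \<noteq> 0" "1 \<le> i" "alpha b \<gamma> i < alpha b \<gamma> (Suc i)"
  shows "\<gamma> ^ Suc i * norm (b 1) / 2 \<le> norm (gso b (Suc i)) / alpha b \<gamma> (Suc i)"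
proof -
  define x where "x = norm (gso b (Suc i)) / (\<gamma> ^ Suc i * norm (b 1))"
  have ceil: "alpha b \<gamma> (Suc i) = of_int \<lceil>x\<rceil>"
    using alpha_Suc[OF assms(3), of b \<gamma>] assms(4) by (auto simp: x_def max_def split: if_splits)
  then have "\<lceil>x\<rceil> \<ge> 2"
    using assms(4) alpha_ge_1[of b \<gamma> i] by linarith
  then have "alpha b \<gamma> (Suc i) / 2 \<le> x"
    using ceil by linarith
  moreover have "\<gamma> ^ Suc i * norm (b 1) > 0"
    using assms by simp
  ultimately show ?thesis
    using alpha_ge_1[of b \<gamma> "Suc i"] by (simp add: x_def field_simps)
qed

lemma lovasz_div_alpha:
  assumes "LLL_reduced b n" "\<gamma> \<ge> 2" "b 1 \<noteq> 0" "1 \<le> i" "i + 1 \<le> n"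
  shows "3/4 * (norm (gso b i) / alpha b \<gamma> i)\<^sup>2
    \<le> (norm (gso b (i+1)) / alpha b \<gamma> (i+1))\<^sup>2 + (mu b i (i+1))\<^sup>2 * (norm (gso b i) / alpha b \<gamma> i)\<^sup>2"
proof (cases "alpha b \<gamma> (Suc i) = alpha b \<gamma> i")
  case True
  have "3/4 * (norm (gso b i))\<^sup>2 \<le> (norm (gso b (i+1)))\<^sup>2 + (mu b i (i+1))\<^sup>2 * (norm (gso b i))\<^sup>2"
    using assms unfolding LLL_reduced_def by auto
  then have "3/4 * (norm (gso b i))\<^sup>2 / (alpha b \<gamma> i)\<^sup>2
      \<le> ((norm (gso b (i+1)))\<^sup>2 + (mu b i (i+1))\<^sup>2 * (norm (gso b i))\<^sup>2) / (alpha b \<gamma> i)\<^sup>2"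
    by (rule divide_right_mono) simp
  then show ?thesis
    using True by (simp add: power_divide add_divide_distrib)
next
  case False
  then have increase: "alpha b \<gamma> i < alpha b \<gamma> (Suc i)"
    using alpha_Suc[OF assms(4), of b \<gamma>] by simp
  have "norm (gso b i) / alpha b \<gamma> i \<le> \<gamma> ^ i * norm (b 1)"
    using assms by (intro norm_gso_div_alpha_le) auto
  also have "\<dots> \<le> \<gamma> ^ Suc i * norm (b 1) / 2"
  proof -
    have "0 \<le> \<gamma> ^ i * norm (b 1)"
      using assms(2) by simp
    from mult_right_mono[OF assms(2) this] show ?thesis
      by (simp add: mult_ac)
  qed
  also have "\<dots> \<le> norm (gso b (i+1)) / alpha b \<gamma> (i+1)"
    using norm_gso_div_alpha_ge[OF _ assms(3,4) increase] assms(2) by simp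
  finally have "(norm (gso b i) / alpha b \<gamma> i)\<^sup>2 \<le> (norm (gso b (i+1)) / alpha b \<gamma> (i+1))\<^sup>2"
    by (rule power_mono) (use alpha_ge_1[of b \<gamma> i] in simp)
  moreover have "0 \<le> (mu b i (i+1))\<^sup>2 * (norm (gso b i) / alpha b \<gamma> i)\<^sup>2"
    by simp
  moreover have "0 \<le> (norm (gso b i) / alpha b \<gamma> i)\<^sup>2"
    by simp
  ultimately show ?thesis
    by linarith
qed

lemma
  shows gso_A_map: "i \<in> {1..n} \<Longrightarrow> gso (\<lambda>j. A_map b n \<gamma> (b j)) i = (1 / alpha b \<gamma> i) *\<^sub>R gso b i"
    and mu_A_map: "1 \<le> h \<Longrightarrow> h < i \<Longrightarrow> i \<le> n \<Longrightarrow> mu (\<lambda>j. A_map b n \<gamma> (b j)) h i = mu b h i"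
proof -
  have "1 / alpha b \<gamma> i \<noteq> 0" for i
    using alpha_ge_1[of b \<gamma> i] by simp
  then show "i \<in> {1..n} \<Longrightarrow> gso (\<lambda>j. A_map b n \<gamma> (b j)) i = (1 / alpha b \<gamma> i) *\<^sub>R gso b i"
    and "1 \<le> h \<Longrightarrow> h < i \<Longrightarrow> i \<le> n \<Longrightarrow> mu (\<lambda>j. A_map b n \<gamma> (b j)) h i = mu b h i"
    using gso_linear_rescale[OF linear_A_map A_map_gso] mu_linear_rescale[OF linear_A_map A_map_gso]
    by blast+
qed

lemma norm_gso_A_map:
  "i \<in> {1..n} \<Longrightarrow> norm (gso (\<lambda>j. A_map b n \<gamma> (b j)) i) = norm (gso b i) / alpha b \<gamma> i"
  using alpha_ge_1[of b \<gamma> i] by (simp add: gso_A_map)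

lemma A_map_first: "1 \<le> n \<Longrightarrow> A_map b n \<gamma> (b 1) = b 1"
proof -
  assume "1 \<le> n"
  have "A_map b n \<gamma> (b 1) = gso (\<lambda>j. A_map b n \<gamma> (b j)) 1"
    by (rule gso_1[symmetric])
  also have "\<dots> = (1 / alpha b \<gamma> 1) *\<^sub>R gso b 1"
    using \<open>1 \<le> n\<close> by (intro gso_A_map) simp
  also have "\<dots> = b 1"
    unfolding gso_1 by simp
  finally show ?thesis .
qed

lemma norm_gso_A_map_le:
  assumes "\<gamma> \<ge> 1" "b 1 \<noteq> 0" "j \<in> {1..n}" "j \<le> i"
  shows "norm (gso (\<lambda>j. A_map b n \<gamma> (b j)) j) \<le> \<gamma> ^ i * norm (b 1)"
proof -
  have "norm (gso (\<lambda>j. A_map b n \<gamma> (b j)) j) \<le> \<gamma> ^ j * norm (b 1)"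
    unfolding norm_gso_A_map[OF assms(3)] using assms by (intro norm_gso_div_alpha_le) auto
  also have "\<dots> \<le> \<gamma> ^ i * norm (b 1)"
    using assms by (intro mult_right_mono power_increasing) auto
  finally show ?thesis .
qed

lemma LLL_reduced_A_map:
  assumes "LLL_reduced b n" "\<gamma> \<ge> 2" "b 1 \<noteq> 0"
  shows "LLL_reduced (\<lambda>j. A_map b n \<gamma> (b j)) n"
  unfolding LLL_reduced_def
proof (intro conjI allI impI)
  fix i j assume "1 \<le> i \<and> i < j \<and> j \<le> n"
  then show "\<bar>mu (\<lambda>j. A_map b n \<gamma> (b j)) i j\<bar> \<le> 1/2"
    using assms(1) mu_A_map[of i j n b \<gamma>] unfolding LLL_reduced_def by auto
next
  fix i assume "1 \<le> i \<and> i \<le> n - 1"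
  then have i: "1 \<le> i" "i + 1 \<le> n"
    by linarith+
  then have mem: "i \<in> {1..n}" "i + 1 \<in> {1..n}"
    by auto
  have mu_eq: "mu (\<lambda>j. A_map b n \<gamma> (b j)) i (i+1) = mu b i (i+1)"
    using i by (intro mu_A_map) auto
  show "3/4 * (norm (gso (\<lambda>j. A_map b n \<gamma> (b j)) i))\<^sup>2
      \<le> (norm (gso (\<lambda>j. A_map b n \<gamma> (b j)) (i+1)))\<^sup>2
        + (mu (\<lambda>j. A_map b n \<gamma> (b j)) i (i+1))\<^sup>2 * (norm (gso (\<lambda>j. A_map b n \<gamma> (b j)) i))\<^sup>2"
    unfolding norm_gso_A_map[OF mem(1)] norm_gso_A_map[OF mem(2)] mu_eq
    using lovasz_div_alpha[OF assms i] by simp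
qed

theorem mainTheorem13:
  fixes b :: "nat \<Rightarrow> real ^ 'd" and n :: nat and \<gamma> :: real
  assumes "rat_basis b n"
    and "LLL_reduced b n"
    and "\<gamma> \<ge> 2"
  shows "LLL_reduced (\<lambda>j. A_map b n \<gamma> (b j)) n \<and>
    (\<forall>i\<in>{1..n}.
       norm (A_map b n \<gamma> (b 1)) / 2 ^ n \<le> norm (gso (\<lambda>j. A_map b n \<gamma> (b j)) i) \<and>
       norm (gso (\<lambda>j. A_map b n \<gamma> (b j)) i) \<le> norm (A_map b n \<gamma> (b i)) \<and>
       norm (A_map b n \<gamma> (b i)) \<le> (2 * \<gamma>) ^ i * norm (A_map b n \<gamma> (b 1)))"
proof (cases "n = 0")
  case True
  then show ?thesis
    by (simp add: LLL_reduced_def)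
next
  case False
  let ?c = "\<lambda>j. A_map b n \<gamma> (b j)"
  have "b 1 \<in> b ` {1..n}"
    using False by simp
  then have b1: "b 1 \<noteq> 0"
    using assms(1) dependent_zero unfolding rat_basis_def by metis
  have LLL: "LLL_reduced ?c n"
    using LLL_reduced_A_map[OF assms(2,3) b1] .
  have size: "\<bar>mu ?c j i\<bar> \<le> 1" if "1 \<le> j" "j < i" "i \<le> n" for i j
    using LLL that unfolding LLL_reduced_def by fastforce
  have "norm (?c i) \<le> (2 * \<gamma>) ^ i * norm (?c 1)" if "i \<in> {1..n}" for i
  proof -
    have "norm (?c i) \<le> 2 ^ i * (\<gamma> ^ i * norm (b 1))"
      using that size assms(3) b1 norm_gso_A_map_le[of \<gamma> b _ n i]
      by (intro norm_le_of_norm_gso_le) auto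
    then show ?thesis
      using False A_map_first[of n b \<gamma>] by (simp add: power_mult_distrib)
  qed
  then show ?thesis
    using LLL LLL_reduced_norm_first_le[OF LLL] norm_gso_le_norm by blast
qed

end
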